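(* Let $V, L \ge 1$ be integers, $[V]=\{1,\dots,V\}$, and $\mathcal{D}=[V]^L$ the set of sequences $x=(x^1,\dots,x^L)$. Let $\pi(x_0,x_1)$ be a joint probability distribution on $\mathcal{D}\times\mathcal{D}$ with marginals $p(x_0)=\sum_{x_1}\pi(x_0,x_1)$ and $q(x_1)=\sum_{x_0}\pi(x_0,x_1)$. Let $\kappa:[0,1]\to[0,1]$ be a differentiable scheduler with $\kappa_0=0$, $\kappa_1=1$ and $\kappa_t<1$ for $t<1$. Define the conditional flow $$p_t(x\mid x_0,x_1)=\prod_{i=1}^L\Big[(1-\kappa_t)\,\delta_{x_0^i}(x^i)+\kappa_t\,\delta_{x_1^i}(x^i)\Big],$$ the flow $p_t(x)=\sum_{x_0,x_1\in\mathcal{D}}p_t(x\mid x_0,x_1)\,\pi(x_0,x_1)$ (which transforms $p$ into $q$), the conditional probability velocities $$u_t^i(x^i,z\mid x_0,x_1)=\frac{\dot\kappa_t}{1-\kappa_t}\big[\delta_{x_1^i}(x^i)-\delta_{z^i}(x^i)\big],\quad x^i\in[V],\ z\in\mathcal{D},$$ and the (marginal) probability velocity $$u_t^i(x^i,z)=\sum_{x_0,x_1\in\mathcal{D}}u_t^i(x^i,z\mid x_0,x_1)\,p_t(x_0,x_1\mid z),\qquad p_t(x_0,x_1\mid z)=\frac{p_t(z\mid x_0,x_1)\pi(x_0,x_1)}{p_t(z)}.$$ Let $s:[V]\times[V]\to[0,\infty)$ be a similarity metric between tokens (in particular symmetric, with $s(a,a)=0$). Then $$\int_0^1\sum_{x_t\in\mathcal{D}}p_t(x_t)\Big[\sum_{i=1}^L\sum_{x^i\neq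 x_t^i}u_t^i(x^i,x_t)\,s(x^i,x_t^i)\Big]dt=\sum_{x_0,x_1\in\mathcal{D}}c(x_0,x_1)\,\pi(x_0,x_1),\qquad c(x_0,x_1)=\sum_{i=1}^L s(x_0^i,x_1^i).$$ That is, this dynamic objective equals the Kantorovich transport cost of the coupling $\pi$ with cost function $c$.
   Context: $\delta_a(b)$ equals $1$ if $a=b$ and $0$ otherwise; $x^i$ denotes the $i$-th entry of a sequence $x\in[V]^L$, and $\dot\kappa_t$ is the time derivative of $\kappa_t$. Terms of the outer sum with $p_t(x_t)=0$ contribute zero. The left-hand side is called the categorical dynamic formulation: it is the expected outflow of probability mass from the current state over time, with each outflow to token $x^i$ weighted by $s(x^i,x_t^i)$. *)

theory Defs
  imports "HOL-Analysis.Analysis"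
begin

text \<open>Sequences of length L over the token set [V] = {1..V}; positions are indexed 0..L-1.\<close>
definition seqs :: "nat \<Rightarrow> nat \<Rightarrow> nat list set" where
  "seqs V L = {x. length x = L \<and> set x \<subseteq> {1..V}}"

definition delta :: "nat \<Rightarrow> nat \<Rightarrow> real" where
  "delta a b = (if a = b then 1 else 0)"

definition cond_flow :: "nat \<Rightarrow> (real \<Rightarrow> real) \<Rightarrow> real \<Rightarrow> nat list \<Rightarrow> nat list \<Rightarrow> nat list \<Rightarrow> real" where
  "cond_flow L \<kappa> t x x0 x1 =
     (\<Prod>i<L. (1 - \<kappa> t) * delta (x0 ! i) (x ! i) + \<kappa> t * delta (x1 ! i) (x ! i))"

definition flow :: "nat \<Rightarrow> nat \<Rightarrow> (real \<Rightarrow> real) \<Rightarrow> (nat list \<Rightarrow> nat list \<Rightarrow> real) \<Rightarrow> real \<Rightarrow> nat list \<Rightarrow> real" where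
  "flow V L \<kappa> \<pi> t x = (\<Sum>x0\<in>seqs V L. \<Sum>x1\<in>seqs V L. cond_flow L \<kappa> t x x0 x1 * \<pi> x0 x1)"

text \<open>Conditional probability velocity u_t^i(a, z | x0, x1); \<kappa>' is the derivative of \<kappa>.\<close>
definition cond_vel :: "(real \<Rightarrow> real) \<Rightarrow> (real \<Rightarrow> real) \<Rightarrow> real \<Rightarrow> nat \<Rightarrow> nat \<Rightarrow> nat list \<Rightarrow> nat list \<Rightarrow> nat list \<Rightarrow> real" where
  "cond_vel \<kappa> \<kappa>' t i a z x0 x1 = \<kappa>' t / (1 - \<kappa> t) * (delta (x1 ! i) a - delta (z ! i) a)"

definition posterior :: "nat \<Rightarrow> nat \<Rightarrow> (real \<Rightarrow> real) \<Rightarrow> (nat list \<Rightarrow> nat list \<Rightarrow> real) \<Rightarrow> real \<Rightarrow> nat list \<Rightarrow> nat list \<Rightarrow> nat list \<Rightarrow> real" where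
  "posterior V L \<kappa> \<pi> t x0 x1 z = cond_flow L \<kappa> t z x0 x1 * \<pi> x0 x1 / flow V L \<kappa> \<pi> t z"

definition vel :: "nat \<Rightarrow> nat \<Rightarrow> (real \<Rightarrow> real) \<Rightarrow> (real \<Rightarrow> real) \<Rightarrow> (nat list \<Rightarrow> nat list \<Rightarrow> real) \<Rightarrow> real \<Rightarrow> nat \<Rightarrow> nat \<Rightarrow> nat list \<Rightarrow> real" where
  "vel V L \<kappa> \<kappa>' \<pi> t i a z =
     (\<Sum>x0\<in>seqs V L. \<Sum>x1\<in>seqs V L. cond_vel \<kappa> \<kappa>' t i a z x0 x1 * posterior V L \<kappa> \<pi> t x0 x1 z)"

definition cost :: "nat \<Rightarrow> (nat \<Rightarrow> nat \<Rightarrow> real) \<Rightarrow> nat list \<Rightarrow> nat list \<Rightarrow> real" where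
  "cost L s x0 x1 = (\<Sum>i<L. s (x0 ! i) (x1 ! i))"

end

theory Submission
  imports Defs
begin

text \<open>
  Away from \<open>t = 1\<close> the posterior cancels against \<open>p\<^sub>t\<close>: the flux \<open>p\<^sub>t(x) u\<^sub>t\<^sup>i(a, x)\<close> is the
  \<open>\<pi>\<close>-average of the conditional fluxes \<open>p\<^sub>t(x | x\<^sub>0, x\<^sub>1) u\<^sub>t\<^sup>i(a, x | x\<^sub>0, x\<^sub>1)\<close> (where \<open>p\<^sub>t(x) = 0\<close>
  both vanish, as \<open>\<pi> \<ge> 0\<close>). For a fixed pair, the conditional velocity only pushes the \<open>i\<close>-th
  token towards \<open>x\<^sub>1\<^sup>i\<close>, with rate \<open>\<kappa>'\<^sub>t / (1 - \<kappa>\<^sub>t)\<close>, and under the product measure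
  \<open>p\<^sub>t(\<cdot> | x\<^sub>0, x\<^sub>1)\<close> the \<open>i\<close>-th token differs from \<open>x\<^sub>1\<^sup>i\<close> only when it is \<open>x\<^sub>0\<^sup>i\<close>, which has
  probability \<open>1 - \<kappa>\<^sub>t\<close>. So the conditional integrand is \<open>\<kappa>'\<^sub>t c(x\<^sub>0, x\<^sub>1)\<close>, and integrating
  \<open>\<kappa>'\<close> over \<open>[0, 1]\<close> gives \<open>\<kappa>\<^sub>1 - \<kappa>\<^sub>0 = 1\<close>.
\<close>

lemma seqs_Suc: "seqs V (Suc L) = (\<lambda>(a, xs). a # xs) ` ({1..V} \<times> seqs V L)"
  unfolding seqs_def by (auto simp: length_Suc_conv image_iff)

lemma finite_seqs: "finite (seqs V L)"
proof -
  have "seqs V L = {xs. set xs \<subseteq> {1..V} \<and> length xs = L}"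
    unfolding seqs_def by auto
  then show ?thesis
    using finite_lists_length_eq[of "{1..V}" L] by simp
qed

lemma nth_in_seqs: "x \<in> seqs V L \<Longrightarrow> i < L \<Longrightarrow> x ! i \<in> {1..V}"
  unfolding seqs_def by (auto dest!: nth_mem)

lemma sum_seqs_prod_nth:
  fixes g :: "nat \<Rightarrow> nat \<Rightarrow> 'a::comm_semiring_1"
  shows "(\<Sum>x\<in>seqs V L. \<Prod>j<L. g j (x ! j)) = (\<Prod>j<L. \<Sum>b\<in>{1..V}. g j b)"
proof (induction L arbitrary: g)
  case 0
  have "seqs V 0 = {[]}"
    unfolding seqs_def by auto
  then show ?case by simp
next
  case (Suc L)
  have inj: "inj_on (\<lambda>(a, xs). a # xs) ({1..V} \<times> seqs V L)"
    by (auto simp: inj_on_def)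
  have "(\<Sum>x\<in>seqs V (Suc L). \<Prod>j<Suc L. g j (x ! j))
      = (\<Sum>a\<in>{1..V}. \<Sum>xs\<in>seqs V L. g 0 a * (\<Prod>j<L. g (Suc j) (xs ! j)))"
    unfolding seqs_Suc sum.reindex[OF inj] sum.cartesian_product
    by (simp add: case_prod_unfold prod.lessThan_Suc_shift del: prod.lessThan_Suc)
  also have "\<dots> = (\<Sum>a\<in>{1..V}. g 0 a * (\<Prod>j<L. \<Sum>b\<in>{1..V}. g (Suc j) b))"
    by (simp only: sum_distrib_left[symmetric] Suc.IH[of "\<lambda>j. g (Suc j)"])
  also have "\<dots> = (\<Prod>j<Suc L. \<Sum>b\<in>{1..V}. g j b)"
    by (simp only: prod.lessThan_Suc_shift sum_distrib_right)
  finally show ?case .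
qed

lemma sum_delta_mult: "c \<in> {1..V} \<Longrightarrow> (\<Sum>b\<in>{1..V}. delta c b * f b) = f c"
  unfolding delta_def by (simp add: if_distrib[of "\<lambda>x. x * _"] cong: if_cong)

lemma cond_flow_nonneg: "0 \<le> \<kappa> t \<Longrightarrow> \<kappa> t \<le> 1 \<Longrightarrow> 0 \<le> cond_flow L \<kappa> t x x0 x1"
  unfolding cond_flow_def delta_def by (intro prod_nonneg) auto

lemma sum_cond_flow_mult_nth:
  assumes "x0 \<in> seqs V L" "x1 \<in> seqs V L" "i < L"
  shows "(\<Sum>x\<in>seqs V L. cond_flow L \<kappa> t x x0 x1 * G (x ! i))
       = (1 - \<kappa> t) * G (x0 ! i) + \<kappa> t * G (x1 ! i)"
proof -
  let ?c = "\<lambda>j b. (1 - \<kappa> t) * delta (x0 ! j) b + \<kappa> t * delta (x1 ! j) b"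
  let ?G = "\<lambda>j b. if j = i then G b else 1"
  have "(\<Sum>x\<in>seqs V L. cond_flow L \<kappa> t x x0 x1 * G (x ! i))
      = (\<Sum>x\<in>seqs V L. \<Prod>j<L. ?c j (x ! j) * ?G j (x ! j))"
    using assms(3) by (simp add: cond_flow_def prod.distrib prod.delta)
  also have "\<dots> = (\<Prod>j<L. \<Sum>b\<in>{1..V}. ?c j b * ?G j b)"
    by (rule sum_seqs_prod_nth)
  also have "\<dots> = (\<Prod>j<L. if j = i then (1 - \<kappa> t) * G (x0 ! i) + \<kappa> t * G (x1 ! i) else 1)"
  proof (rule prod.cong)
    fix j assume "j \<in> {..<L}"
    then have "x0 ! j \<in> {1..V}" "x1 ! j \<in> {1..V}"
      using assms nth_in_seqs by auto
    then have "(\<Sum>b\<in>{1..V}. ?c j b * ?G j b) = (1 - \<kappa> t) * ?G j (x0 ! j) + \<kappa> t * ?G j (x1 ! j)"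
      by (simp only: distrib_right mult.assoc sum.distrib sum_distrib_left[symmetric] sum_delta_mult)
    then show "(\<Sum>b\<in>{1..V}. ?c j b * ?G j b)
        = (if j = i then (1 - \<kappa> t) * G (x0 ! i) + \<kappa> t * G (x1 ! i) else 1)"
      by simp
  qed simp
  also have "\<dots> = (1 - \<kappa> t) * G (x0 ! i) + \<kappa> t * G (x1 ! i)"
    using assms(3) by (simp add: prod.delta)
  finally show ?thesis .
qed

lemma flow_mult_vel:
  assumes \<pi>_nonneg: "\<And>x0 x1. x0 \<in> seqs V L \<Longrightarrow> x1 \<in> seqs V L \<Longrightarrow> 0 \<le> \<pi> x0 x1"
    and "0 \<le> \<kappa> t" "\<kappa> t \<le> 1"
  shows "flow V L \<kappa> \<pi> t x * vel V L \<kappa> \<kappa>' \<pi> t i a x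
       = (\<Sum>(x0, x1)\<in>seqs V L \<times> seqs V L.
            \<pi> x0 x1 * cond_flow L \<kappa> t x x0 x1 * cond_vel \<kappa> \<kappa>' t i a x x0 x1)"
proof (cases "flow V L \<kappa> \<pi> t x = 0")
  case True
  let ?w = "\<lambda>(x0, x1). \<pi> x0 x1 * cond_flow L \<kappa> t x x0 x1"
  have "\<And>p. p \<in> seqs V L \<times> seqs V L \<Longrightarrow> 0 \<le> ?w p"
    using \<pi>_nonneg cond_flow_nonneg[where \<kappa> = \<kappa> and t = t, OF assms(2,3)] by auto
  from sum_nonneg_eq_0_iff[OF finite_cartesian_product[OF finite_seqs finite_seqs] this]
  have "\<forall>p\<in>seqs V L \<times> seqs V L. ?w p = 0"
    using True by (simp add: flow_def sum.cartesian_product mult.commute)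
  then show ?thesis
    by (simp add: True) (intro sum.neutral; auto)
next
  case False
  then show ?thesis
    unfolding vel_def posterior_def sum.cartesian_product[symmetric] sum_distrib_left
    by (intro sum.cong refl) (simp add: field_simps)
qed

lemma sum_cond_vel_mult:
  assumes "x1 ! i \<in> {1..V}"
  shows "(\<Sum>a\<in>{1..V} - {z ! i}. cond_vel \<kappa> \<kappa>' t i a z x0 x1 * f a)
       = \<kappa>' t / (1 - \<kappa> t) * (if x1 ! i = z ! i then 0 else f (x1 ! i))"
proof -
  have "(\<Sum>a\<in>{1..V} - {z ! i}. cond_vel \<kappa> \<kappa>' t i a z x0 x1 * f a)
      = (\<Sum>a\<in>{1..V} - {z ! i}. \<kappa>' t / (1 - \<kappa> t) * (if x1 ! i = a then f a else 0))"
    by (intro sum.cong) (auto simp: cond_vel_def delta_def)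
  also have "\<dots> = \<kappa>' t / (1 - \<kappa> t) * (\<Sum>a\<in>{1..V} - {z ! i}. if x1 ! i = a then f a else 0)"
    by (rule sum_distrib_left[symmetric])
  finally show ?thesis
    using assms by simp
qed

lemma cond_outflow_cost:
  assumes x0: "x0 \<in> seqs V L" and x1: "x1 \<in> seqs V L" and "\<kappa> t < 1"
    and s_refl: "\<And>a. a \<in> {1..V} \<Longrightarrow> s a a = 0"
    and s_sym: "\<And>a b. a \<in> {1..V} \<Longrightarrow> b \<in> {1..V} \<Longrightarrow> s a b = s b a"
  shows "(\<Sum>x\<in>seqs V L. cond_flow L \<kappa> t x x0 x1 *
            (\<Sum>i<L. \<Sum>a\<in>{1..V} - {x ! i}. cond_vel \<kappa> \<kappa>' t i a x x0 x1 * s a (x ! i)))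
       = \<kappa>' t * cost L s x0 x1"
proof -
  let ?F = "\<lambda>i b. \<kappa>' t / (1 - \<kappa> t) * (if x1 ! i = b then 0 else s (x1 ! i) b)"
  have "(\<Sum>x\<in>seqs V L. cond_flow L \<kappa> t x x0 x1 *
            (\<Sum>i<L. \<Sum>a\<in>{1..V} - {x ! i}. cond_vel \<kappa> \<kappa>' t i a x x0 x1 * s a (x ! i)))
      = (\<Sum>x\<in>seqs V L. cond_flow L \<kappa> t x x0 x1 * (\<Sum>i<L. ?F i (x ! i)))"
    by (intro sum.cong refl arg_cong2[where f = "(*)"] sum_cond_vel_mult nth_in_seqs[OF x1]) simp
  also have "\<dots> = (\<Sum>i<L. \<Sum>x\<in>seqs V L. cond_flow L \<kappa> t x x0 x1 * ?F i (x ! i))"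
    by (simp only: sum_distrib_left sum.swap[of _ "{..<L}"])
  also have "\<dots> = (\<Sum>i<L. (1 - \<kappa> t) * ?F i (x0 ! i) + \<kappa> t * ?F i (x1 ! i))"
  proof (intro sum.cong refl)
    fix i assume "i \<in> {..<L}"
    then show "(\<Sum>x\<in>seqs V L. cond_flow L \<kappa> t x x0 x1 * ?F i (x ! i))
        = (1 - \<kappa> t) * ?F i (x0 ! i) + \<kappa> t * ?F i (x1 ! i)"
      using sum_cond_flow_mult_nth[OF x0 x1, where G = "?F i"] by simp
  qed
  also have "\<dots> = (\<Sum>i<L. \<kappa>' t * s (x0 ! i) (x1 ! i))"
    using \<open>\<kappa> t < 1\<close> nth_in_seqs[OF x0] nth_in_seqs[OF x1] s_refl s_sym
    by (intro sum.cong) auto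
  finally show ?thesis
    by (simp add: cost_def sum_distrib_left)
qed

lemma flow_mult_outflow:
  assumes \<pi>_nonneg: "\<And>x0 x1. x0 \<in> seqs V L \<Longrightarrow> x1 \<in> seqs V L \<Longrightarrow> 0 \<le> \<pi> x0 x1"
    and "0 \<le> \<kappa> t" "\<kappa> t \<le> 1"
  shows "flow V L \<kappa> \<pi> t x *
            (\<Sum>i<L. \<Sum>a\<in>{1..V} - {x ! i}. vel V L \<kappa> \<kappa>' \<pi> t i a x * s a (x ! i))
       = (\<Sum>(x0, x1)\<in>seqs V L \<times> seqs V L. \<pi> x0 x1 * cond_flow L \<kappa> t x x0 x1 *
            (\<Sum>i<L. \<Sum>a\<in>{1..V} - {x ! i}. cond_vel \<kappa> \<kappa>' t i a x x0 x1 * s a (x ! i)))"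
proof -
  let ?P = "seqs V L \<times> seqs V L"
  have "flow V L \<kappa> \<pi> t x *
          (\<Sum>i<L. \<Sum>a\<in>{1..V} - {x ! i}. vel V L \<kappa> \<kappa>' \<pi> t i a x * s a (x ! i))
      = (\<Sum>i<L. \<Sum>a\<in>{1..V} - {x ! i}. \<Sum>(x0, x1)\<in>?P.
          \<pi> x0 x1 * cond_flow L \<kappa> t x x0 x1 * cond_vel \<kappa> \<kappa>' t i a x x0 x1 * s a (x ! i))"
    by (simp only: sum_distrib_left sum_distrib_right mult.assoc[symmetric] flow_mult_vel[where \<kappa> = \<kappa> and t = t, OF assms]
        case_prod_unfold)
  also have "\<dots> = (\<Sum>(x0, x1)\<in>?P. \<Sum>i<L. \<Sum>a\<in>{1..V} - {x ! i}.
          \<pi> x0 x1 * cond_flow L \<kappa> t x x0 x1 * cond_vel \<kappa> \<kappa>' t i a x x0 x1 * s a (x ! i))"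
    by (simp only: sum.swap[of _ ?P] case_prod_unfold)
  finally show ?thesis
    by (simp only: sum_distrib_left mult.assoc)
qed

lemma outflow_cost:
  assumes \<pi>_nonneg: "\<And>x0 x1. x0 \<in> seqs V L \<Longrightarrow> x1 \<in> seqs V L \<Longrightarrow> 0 \<le> \<pi> x0 x1"
    and "0 \<le> \<kappa> t" "\<kappa> t < 1"
    and s_refl: "\<And>a. a \<in> {1..V} \<Longrightarrow> s a a = 0"
    and s_sym: "\<And>a b. a \<in> {1..V} \<Longrightarrow> b \<in> {1..V} \<Longrightarrow> s a b = s b a"
  shows "(\<Sum>x\<in>seqs V L. flow V L \<kappa> \<pi> t x *
            (\<Sum>i<L. \<Sum>a\<in>{1..V} - {x ! i}. vel V L \<kappa> \<kappa>' \<pi> t i a x * s a (x ! i)))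
       = \<kappa>' t * (\<Sum>x0\<in>seqs V L. \<Sum>x1\<in>seqs V L. cost L s x0 x1 * \<pi> x0 x1)"
proof -
  let ?S = "seqs V L"
  let ?out = "\<lambda>x0 x1 x. \<Sum>i<L. \<Sum>a\<in>{1..V} - {x ! i}. cond_vel \<kappa> \<kappa>' t i a x x0 x1 * s a (x ! i)"
  have "(\<Sum>x\<in>?S. flow V L \<kappa> \<pi> t x *
            (\<Sum>i<L. \<Sum>a\<in>{1..V} - {x ! i}. vel V L \<kappa> \<kappa>' \<pi> t i a x * s a (x ! i)))
      = (\<Sum>x\<in>?S. \<Sum>(x0, x1)\<in>?S \<times> ?S. \<pi> x0 x1 * (cond_flow L \<kappa> t x x0 x1 * ?out x0 x1 x))"
    using flow_mult_outflow[where V = V and L = L and \<pi> = \<pi> and \<kappa> = \<kappa> and t = t,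
        OF \<pi>_nonneg assms(2) less_imp_le[OF assms(3)]]
    by (simp only: mult.assoc)
  also have "\<dots> = (\<Sum>(x0, x1)\<in>?S \<times> ?S. \<pi> x0 x1 * (\<Sum>x\<in>?S. cond_flow L \<kappa> t x x0 x1 * ?out x0 x1 x))"
    by (simp only: sum.swap[of _ ?S] case_prod_unfold sum_distrib_left)
  also have "\<dots> = (\<Sum>(x0, x1)\<in>?S \<times> ?S. \<pi> x0 x1 * (\<kappa>' t * cost L s x0 x1))"
  proof (rule sum.cong[OF refl], clarify)
    fix x0 x1 assume "x0 \<in> ?S" "x1 \<in> ?S"
    then have "(\<Sum>x\<in>?S. cond_flow L \<kappa> t x x0 x1 * ?out x0 x1 x) = \<kappa>' t * cost L s x0 x1"
      by (rule cond_outflow_cost[where \<kappa> = \<kappa> and t = t, OF _ _ assms(3) s_refl s_sym])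
    then show "\<pi> x0 x1 * (\<Sum>x\<in>?S. cond_flow L \<kappa> t x x0 x1 * ?out x0 x1 x)
        = \<pi> x0 x1 * (\<kappa>' t * cost L s x0 x1)"
      by (rule arg_cong)
  qed
  also have "\<dots> = \<kappa>' t * (\<Sum>(x0, x1)\<in>?S \<times> ?S. cost L s x0 x1 * \<pi> x0 x1)"
    by (simp add: sum_distrib_left case_prod_unfold mult_ac)
  finally show ?thesis
    unfolding sum.cartesian_product .
qed

theorem theorem1:
  fixes V L :: nat and \<pi> :: "nat list \<Rightarrow> nat list \<Rightarrow> real"
    and \<kappa> \<kappa>' :: "real \<Rightarrow> real" and s :: "nat \<Rightarrow> nat \<Rightarrow> real"
  assumes "V \<ge> 1" and "L \<ge> 1"
    and pi_nonneg: "\<And>x0 x1. x0 \<in> seqs V L \<Longrightarrow> x1 \<in> seqs V L \<Longrightarrow> \<pi> x0 x1 \<ge> 0"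
    and pi_sum: "(\<Sum>x0\<in>seqs V L. \<Sum>x1\<in>seqs V L. \<pi> x0 x1) = 1"
    and kappa_deriv: "\<And>t. t \<in> {0..1} \<Longrightarrow> (\<kappa> has_real_derivative \<kappa>' t) (at t within {0..1})"
    and kappa_range: "\<And>t. t \<in> {0..1} \<Longrightarrow> \<kappa> t \<in> {0..1}"
    and "\<kappa> 0 = 0" and "\<kappa> 1 = 1"
    and kappa_lt: "\<And>t. t \<in> {0..1} \<Longrightarrow> t < 1 \<Longrightarrow> \<kappa> t < 1"
    and s_nonneg: "\<And>a b. a \<in> {1..V} \<Longrightarrow> b \<in> {1..V} \<Longrightarrow> s a b \<ge> 0"
    and s_zero: "\<And>a b. a \<in> {1..V} \<Longrightarrow> b \<in> {1..V} \<Longrightarrow> s a b = 0 \<longleftrightarrow> a = b"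
    and s_sym: "\<And>a b. a \<in> {1..V} \<Longrightarrow> b \<in> {1..V} \<Longrightarrow> s a b = s b a"
    and s_tri: "\<And>a b c. a \<in> {1..V} \<Longrightarrow> b \<in> {1..V} \<Longrightarrow> c \<in> {1..V} \<Longrightarrow> s a c \<le> s a b + s b c"
  shows "((\<lambda>t. \<Sum>xt\<in>seqs V L. flow V L \<kappa> \<pi> t xt *
            (\<Sum>i<L. \<Sum>a\<in>{1..V} - {xt ! i}. vel V L \<kappa> \<kappa>' \<pi> t i a xt * s a (xt ! i)))
         has_integral (\<Sum>x0\<in>seqs V L. \<Sum>x1\<in>seqs V L. cost L s x0 x1 * \<pi> x0 x1)) {0..1}"
proof -
  \<comment> \<open>The identity is linear in \<open>\<pi>\<close>, and of the metric axioms only \<open>s a a = 0\<close> and symmetry enter.\<close>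
  let ?C = "\<Sum>x0\<in>seqs V L. \<Sum>x1\<in>seqs V L. cost L s x0 x1 * \<pi> x0 x1"
  have s_refl: "\<And>a. a \<in> {1..V} \<Longrightarrow> s a a = 0"
    using s_zero by blast
  have "(\<kappa>' has_integral \<kappa> 1 - \<kappa> 0) {0..1}"
    using kappa_deriv
    by (intro fundamental_theorem_of_calculus) (simp_all add: has_real_derivative_iff_has_vector_derivative)
  from has_integral_mult_left[OF this, of ?C]
  have integral_C: "((\<lambda>t. \<kappa>' t * ?C) has_integral ?C) {0..1}"
    using \<open>\<kappa> 0 = 0\<close> \<open>\<kappa> 1 = 1\<close> by simp
  show ?thesis
  proof (rule has_integral_spike_finite[OF _ _ integral_C, of "{1}"])
    fix t :: real assume "t \<in> {0..1} - {1}"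
    then have \<kappa>_t: "0 \<le> \<kappa> t" "\<kappa> t < 1"
      using kappa_range kappa_lt by auto
    show "(\<Sum>x\<in>seqs V L. flow V L \<kappa> \<pi> t x *
        (\<Sum>i<L. \<Sum>a\<in>{1..V} - {x ! i}. vel V L \<kappa> \<kappa>' \<pi> t i a x * s a (x ! i))) = \<kappa>' t * ?C"
      by (rule outflow_cost[where V = V and L = L and \<pi> = \<pi> and \<kappa> = \<kappa> and t = t and s = s,
          OF pi_nonneg \<kappa>_t s_refl s_sym])
  qed simp
qed

end
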